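(* Consider the static load balancing game with $m$ servers and $n$ players described in the context. There exists a function $\Phi$ on the set of action profiles $A_1\times\cdots\times A_n$ such that for every player $i\in[n]$ and any two action profiles $(a_i,a_{-i})$ and $(a'_i,a_{-i})$ that differ only in the action of player $i$, $$\Phi(a_i,a_{-i})-\Phi(a'_i,a_{-i})=D_i(a_i,a_{-i})-D_i(a'_i,a_{-i}),$$ i.e., the game is an exact potential game. In particular, the game admits a pure Nash equilibrium, and the best-response dynamics (players sequentially replacing their action by a best response to the current actions of the others) converge to a pure Nash equilibrium.
   Context: Static load balancing game: there are $m$ servers $[m]=\{1,\dots,m\}$ with service rates $\mu_j>0$ and initial loads $s_j^0\ge 0$, and $n$ players $[n]=\{1,\dots,n\}$; player $i$ holds a job of length $\lambda_i>0$ which it can split fractionally among servers. Player $i$'s action set is the probability simplex $A_i=\{a_i=(a_{i1},\dots,a_{im}):\sum_{j=1}^m a_{ij}=1,\ a_{ij}\ge 0\}$, where $a_{ij}$ is the fraction of job $i$ placed on server $j$. Given an action profile $a=(a_1,\dots,a_n)$, the cost of player $i$ is $$D_i(a)=\sum_{j=1}^m \lambda_i a_{ij}\left(\frac{\lambda_i a_{ij}}{2\mu_j}+\frac{s_j^0+\sum_{k\neq i}\lambda_k a_{kj}}{\mu_j}\right),$$ and each player wishes to minimize its own cost. A pure Nash equilibrium is a profile $a$ with $D_i(a_i,a_{-i})\le D_i(a_i',a_{-i})$ for all $i$ and all $a_i'\in A_i$. *)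

theory Defs
  imports "HOL-Analysis.Analysis" "HOL-Library.FuncSet"
begin

definition action_simplex :: "nat \<Rightarrow> (nat \<Rightarrow> real) set" where
  "action_simplex m = {b \<in> {..<m} \<rightarrow>\<^sub>E UNIV. (\<forall>j<m. b j \<ge> 0) \<and> (\<Sum>j<m. b j) = 1}"

definition action_profiles :: "nat \<Rightarrow> nat \<Rightarrow> (nat \<Rightarrow> nat \<Rightarrow> real) set" where
  "action_profiles n m = {..<n} \<rightarrow>\<^sub>E action_simplex m"

text \<open>Cost D_i(a) of player i (lam = job lengths, mu = service rates, s0 = initial loads).\<close>
definition cost ::
  "nat \<Rightarrow> nat \<Rightarrow> (nat \<Rightarrow> real) \<Rightarrow> (nat \<Rightarrow> real) \<Rightarrow> (nat \<Rightarrow> real)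
     \<Rightarrow> (nat \<Rightarrow> nat \<Rightarrow> real) \<Rightarrow> nat \<Rightarrow> real" where
  "cost n m lam mu s0 a i =
     (\<Sum>j<m. lam i * a i j *
        (lam i * a i j / (2 * mu j) + (s0 j + (\<Sum>k\<in>{..<n} - {i}. lam k * a k j)) / mu j))"

definition is_best_response ::
  "nat \<Rightarrow> nat \<Rightarrow> (nat \<Rightarrow> real) \<Rightarrow> (nat \<Rightarrow> real) \<Rightarrow> (nat \<Rightarrow> real)
     \<Rightarrow> (nat \<Rightarrow> nat \<Rightarrow> real) \<Rightarrow> nat \<Rightarrow> (nat \<Rightarrow> real) \<Rightarrow> bool" where
  "is_best_response n m lam mu s0 a i b \<longleftrightarrow>
     b \<in> action_simplex m \<and>
     (\<forall>b'\<in>action_simplex m. cost n m lam mu s0 (a(i := b)) i \<le> cost n m lam mu s0 (a(i := b')) i)"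

definition pure_NE ::
  "nat \<Rightarrow> nat \<Rightarrow> (nat \<Rightarrow> real) \<Rightarrow> (nat \<Rightarrow> real) \<Rightarrow> (nat \<Rightarrow> real)
     \<Rightarrow> (nat \<Rightarrow> nat \<Rightarrow> real) \<Rightarrow> bool" where
  "pure_NE n m lam mu s0 a \<longleftrightarrow>
     a \<in> action_profiles n m \<and>
     (\<forall>i<n. \<forall>b\<in>action_simplex m. cost n m lam mu s0 a i \<le> cost n m lam mu s0 (a(i := b)) i)"

definition br_dynamics ::
  "nat \<Rightarrow> nat \<Rightarrow> (nat \<Rightarrow> real) \<Rightarrow> (nat \<Rightarrow> real) \<Rightarrow> (nat \<Rightarrow> real)
     \<Rightarrow> (nat \<Rightarrow> nat \<Rightarrow> nat \<Rightarrow> real) \<Rightarrow> bool" where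
  "br_dynamics n m lam mu s0 x \<longleftrightarrow>
     x 0 \<in> action_profiles n m \<and>
     (\<forall>t. \<exists>b. is_best_response n m lam mu s0 (x t) (t mod n) b \<and>
              x (Suc t) = (x t)(t mod n := b))"

end

theory Submission
  imports Defs
begin

text \<open>With \<open>L\<^sub>j(a)\<close> the total load on server \<open>j\<close>, the function
  \<open>\<Phi>(a) = \<Sum>\<^sub>j (s\<^sub>j\<^sup>0 + L\<^sub>j(a))\<^sup>2 / (2\<mu>\<^sub>j)\<close> is an exact potential.
  It depends on the loads only and is minimised exactly by the profiles realising the
  water-filling loads; every minimiser is a Nash equilibrium.

  A best response satisfies a variational inequality in the latencies
  \<open>(s\<^sub>j\<^sup>0 + L\<^sub>j) / \<mu>\<^sub>j\<close>, so each step of the dynamics lowers \<open>\<Phi>\<close> by at least the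
  weighted squared change of the loads. During a round of \<open>n\<close> steps every player moves once,
  and the latencies drift by at most a quantity whose square is bounded by the decrease of \<open>\<Phi>\<close>
  in that round. Comparing the profile at the end of the round with a nearby optimal profile
  (moving mass from overloaded to underloaded servers costs at most the load discrepancy)
  bounds the gap \<open>\<Phi> - min \<Phi>\<close> by a constant times that decrease. So the gap decays
  geometrically, the steps, bounded by the square root of the gap, are summable, the actions
  converge, and the limit minimises \<open>\<Phi>\<close>.\<close>

lemma action_simplexD:
  assumes "b \<in> action_simplex m"
  shows "\<And>j. j < m \<Longrightarrow> 0 \<le> b j" and "(\<Sum>j<m. b j) = 1"
  using assms unfolding action_simplex_def by (auto simp: PiE_iff)

lemma action_simplexI:
  assumes "b \<in> extensional {..<m}" and "\<And>j. j < m \<Longrightarrow> 0 \<le> b j" and "(\<Sum>j<m. b j) = 1"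
  shows "b \<in> action_simplex m"
  using assms unfolding action_simplex_def by (auto simp: PiE_iff)

lemma action_simplex_convex:
  assumes "b \<in> action_simplex m" and "w \<in> action_simplex m" and "0 \<le> t" and "t \<le> 1"
  shows "(\<lambda>j\<in>{..<m}. (1 - t) * b j + t * w j) \<in> action_simplex m"
proof (rule action_simplexI)
  show "(\<Sum>j<m. (\<lambda>j\<in>{..<m}. (1 - t) * b j + t * w j) j) = 1"
    using action_simplexD(2)[OF assms(1)] action_simplexD(2)[OF assms(2)]
    by (simp add: sum.distrib flip: sum_distrib_left)
qed (use assms action_simplexD(1) in auto)

lemma action_profilesD: "a \<in> action_profiles n m \<Longrightarrow> i < n \<Longrightarrow> a i \<in> action_simplex m"
  unfolding action_profiles_def by auto

lemma action_profiles_nonneg: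
  "a \<in> action_profiles n m \<Longrightarrow> i < n \<Longrightarrow> j < m \<Longrightarrow> 0 \<le> a i j"
  by (rule action_simplexD(1)[OF action_profilesD])

lemma action_profilesI:
  "a \<in> extensional {..<n} \<Longrightarrow> (\<And>i. i < n \<Longrightarrow> a i \<in> action_simplex m) \<Longrightarrow> a \<in> action_profiles n m"
  unfolding action_profiles_def by (auto simp: PiE_iff)

lemma action_profiles_update:
  "a \<in> action_profiles n m \<Longrightarrow> i < n \<Longrightarrow> b \<in> action_simplex m \<Longrightarrow> a(i := b) \<in> action_profiles n m"
  unfolding action_profiles_def by (auto simp: PiE_iff extensional_def)

lemma linear_coeff_nonneg_if_nonneg_near_zero:
  fixes A B :: real
  assumes "\<And>t. 0 < t \<Longrightarrow> t \<le> 1 \<Longrightarrow> 0 \<le> A * t + B * t\<^sup>2"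
  shows "0 \<le> A"
proof (rule ccontr)
  assume "\<not> 0 \<le> A"
  define t where "t = min 1 (- A / (\<bar>B\<bar> + 1))"
  have t: "0 < t" "t \<le> 1"
    using \<open>\<not> 0 \<le> A\<close> by (auto simp: t_def divide_neg_pos abs_add_one_gt_zero)
  have "t \<le> - A / (\<bar>B\<bar> + 1)" by (simp add: t_def)
  then have "t * (\<bar>B\<bar> + 1) \<le> - A" by (simp add: field_simps)
  have "A * t + B * t\<^sup>2 \<le> t * (A + \<bar>B\<bar> * t)"
    using t by (simp add: power2_eq_square algebra_simps mult_right_mono)
  also have "\<dots> < 0"
    using t \<open>t * (\<bar>B\<bar> + 1) \<le> - A\<close> \<open>\<not> 0 \<le> A\<close> by (intro mult_pos_neg) (auto simp: algebra_simps)
  finally show False using assms[OF t(1,2)] by simp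
qed

lemma sum_abs_squared_le_weighted:
  fixes f w :: "'a \<Rightarrow> real"
  assumes "\<And>a. a \<in> A \<Longrightarrow> 0 < w a"
  shows "(\<Sum>a\<in>A. \<bar>f a\<bar>)\<^sup>2 \<le> (\<Sum>a\<in>A. w a) * (\<Sum>a\<in>A. (f a)\<^sup>2 / w a)"
proof -
  have "(\<Sum>a\<in>A. \<bar>f a\<bar>) = (\<Sum>a\<in>A. (\<bar>f a\<bar> / sqrt (w a)) * sqrt (w a))"
  proof (rule sum.cong)
    fix a assume "a \<in> A"
    then have "0 < sqrt (w a)" using assms by simp
    then show "\<bar>f a\<bar> = \<bar>f a\<bar> / sqrt (w a) * sqrt (w a)" by simp
  qed simp
  also have "\<dots>\<^sup>2 \<le> (\<Sum>a\<in>A. (\<bar>f a\<bar> / sqrt (w a))\<^sup>2) * (\<Sum>a\<in>A. (sqrt (w a))\<^sup>2)"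
    by (rule Cauchy_Schwarz_ineq_sum)
  also have "\<dots> = (\<Sum>a\<in>A. (f a)\<^sup>2 / w a) * (\<Sum>a\<in>A. w a)"
    using assms by (intro arg_cong2[where f = "(*)"] sum.cong) (auto simp: power_divide less_imp_le)
  finally show ?thesis by (simp add: mult.commute)
qed

lemma decseq_geometric_bound:
  fixes g :: "nat \<Rightarrow> real"
  assumes "decseq g" and "\<And>t. 0 \<le> g t" and "0 < k" and "0 < \<rho>" and "\<rho> < 1"
    and contract: "\<And>t. g (t + k) \<le> \<rho> * g t"
  shows "\<exists>G \<theta>. 0 < \<theta> \<and> \<theta> < 1 \<and> (\<forall>t. g t \<le> G * \<theta> ^ t)"
proof -
  define \<theta> where "\<theta> = root k \<rho>"
  have \<theta>: "0 < \<theta>" "\<theta> < 1" "\<theta> ^ k = \<rho>"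
    using assms by (auto simp: \<theta>_def)
  define G where "G = g 0 / \<rho>"
  have G: "0 \<le> G" using assms by (simp add: G_def)
  have "g t \<le> G * \<theta> ^ t" for t
  proof (induction t rule: less_induct)
    case (less t)
    show ?case
    proof (cases "t < k")
      case True
      have "g t \<le> g 0"
        using \<open>decseq g\<close> by (simp add: decseq_def)
      also have "\<dots> = G * \<theta> ^ k" using \<theta> assms by (simp add: G_def)
      also have "\<dots> \<le> G * \<theta> ^ t"
        using True \<theta> G by (intro mult_left_mono power_decreasing) auto
      finally show ?thesis .
    next
      case False
      then obtain s where t: "t = s + k" by (metis add.commute le_Suc_ex not_less)
      have "g t \<le> \<rho> * g s" using contract t by simp
      also have "\<dots> \<le> \<rho> * (G * \<theta> ^ s)"
        using less.IH[of s] t assms by (intro mult_left_mono) auto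
      also have "\<dots> = G * \<theta> ^ t" using \<theta> t by (simp add: power_add)
      finally show ?thesis .
    qed
  qed
  then show ?thesis using \<theta> by blast
qed

lemma convergent_if_summable_increments:
  fixes f :: "nat \<Rightarrow> real"
  assumes "summable (\<lambda>t. f (Suc t) - f t)"
  shows "convergent f"
proof -
  have "(\<lambda>t. f 0 + (\<Sum>s<t. f (Suc s) - f s)) \<longlonglongrightarrow> f 0 + (\<Sum>s. f (Suc s) - f s)"
    by (intro tendsto_add tendsto_const summable_LIMSEQ assms)
  then show ?thesis
    by (auto simp: sum_lessThan_telescope convergent_def)
qed

section \<open>The exact potential\<close>

locale load_balancing =
  fixes n m :: nat and lam mu s0 :: "nat \<Rightarrow> real"
  assumes players: "1 \<le> n" and servers: "1 \<le> m"
    and mu_pos: "\<And>j. j < m \<Longrightarrow> 0 < mu j"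
    and s0_nonneg: "\<And>j. j < m \<Longrightarrow> 0 \<le> s0 j"
    and lam_pos: "\<And>i. i < n \<Longrightarrow> 0 < lam i"
begin

abbreviation profiles :: "(nat \<Rightarrow> nat \<Rightarrow> real) set" where
  "profiles \<equiv> action_profiles n m"

abbreviation player_cost :: "(nat \<Rightarrow> nat \<Rightarrow> real) \<Rightarrow> nat \<Rightarrow> real" where
  "player_cost \<equiv> cost n m lam mu s0"

definition load :: "(nat \<Rightarrow> nat \<Rightarrow> real) \<Rightarrow> nat \<Rightarrow> real" where
  "load a j = (\<Sum>k<n. lam k * a k j)"

definition latency :: "(nat \<Rightarrow> nat \<Rightarrow> real) \<Rightarrow> nat \<Rightarrow> real" where
  "latency a j = (s0 j + load a j) / mu j"

definition potential :: "(nat \<Rightarrow> nat \<Rightarrow> real) \<Rightarrow> real" where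
  "potential a = (\<Sum>j<m. (s0 j + load a j)\<^sup>2 / (2 * mu j))"

definition load_sqdist :: "(nat \<Rightarrow> nat \<Rightarrow> real) \<Rightarrow> (nat \<Rightarrow> nat \<Rightarrow> real) \<Rightarrow> real" where
  "load_sqdist a b = (\<Sum>j<m. (load a j - load b j)\<^sup>2 / (2 * mu j))"

lemma load_sqdist_nonneg: "0 \<le> load_sqdist a b"
  unfolding load_sqdist_def by (intro sum_nonneg divide_nonneg_pos) (auto simp: mu_pos)

lemma load_sqdist_commute: "load_sqdist a b = load_sqdist b a"
  unfolding load_sqdist_def by (simp add: power2_commute)

lemma load_remove:
  "i < n \<Longrightarrow> load a j = lam i * a i j + (\<Sum>k\<in>{..<n} - {i}. lam k * a k j)"
  unfolding load_def by (simp add: sum.remove)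

lemma load_update: "i < n \<Longrightarrow> load (a(i := b)) j = load a j + lam i * (b j - a i j)"
  using load_remove[of i a j] load_remove[of i "a(i := b)" j] by (simp add: algebra_simps)

lemma potential_minus_cost:
  assumes "i < n"
  shows "potential a - player_cost a i
    = (\<Sum>j<m. (s0 j + (\<Sum>k\<in>{..<n} - {i}. lam k * a k j))\<^sup>2 / (2 * mu j))"
  unfolding potential_def cost_def sum_subtractf[symmetric]
proof (rule sum.cong)
  fix j assume "j \<in> {..<m}"
  then have "0 < mu j" by (simp add: mu_pos)
  then show "(s0 j + load a j)\<^sup>2 / (2 * mu j) - lam i * a i j * (lam i * a i j / (2 * mu j)
      + (s0 j + (\<Sum>k\<in>{..<n} - {i}. lam k * a k j)) / mu j)
    = (s0 j + (\<Sum>k\<in>{..<n} - {i}. lam k * a k j))\<^sup>2 / (2 * mu j)"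
    unfolding load_remove[OF assms] by (simp add: field_simps power2_eq_square)
qed simp

theorem potential_exact:
  assumes "i < n"
  shows "potential a - potential (a(i := b)) = player_cost a i - player_cost (a(i := b)) i"
proof -
  have "(\<Sum>k\<in>{..<n} - {i}. lam k * (a(i := b)) k j) = (\<Sum>k\<in>{..<n} - {i}. lam k * a k j)" for j
    by (rule sum.cong) auto
  then show ?thesis
    using potential_minus_cost[OF assms, of a] potential_minus_cost[OF assms, of "a(i := b)"]
    by simp
qed

lemma potential_diff:
  "potential a - potential b = (\<Sum>j<m. latency b j * (load a j - load b j)) + load_sqdist a b"
proof -
  have "potential a - potential b
      = (\<Sum>j<m. latency b j * (load a j - load b j) + (load a j - load b j)\<^sup>2 / (2 * mu j))"
    unfolding potential_def sum_subtractf[symmetric]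
  proof (rule sum.cong)
    fix j assume "j \<in> {..<m}"
    then have "0 < mu j" by (simp add: mu_pos)
    then show "(s0 j + load a j)\<^sup>2 / (2 * mu j) - (s0 j + load b j)\<^sup>2 / (2 * mu j)
      = latency b j * (load a j - load b j) + (load a j - load b j)\<^sup>2 / (2 * mu j)"
      unfolding latency_def by (simp add: field_simps power2_eq_square)
  qed simp
  then show ?thesis by (simp add: sum.distrib load_sqdist_def)
qed

lemma sum_load_diff:
  "(\<Sum>j<m. g j * (load a j - load b j)) = (\<Sum>i<n. lam i * (\<Sum>j<m. g j * (a i j - b i j)))"
  unfolding load_def sum_subtractf[symmetric]
  by (simp add: sum_distrib_left algebra_simps sum.swap[of _ "{..<m}"])

lemma potential_update_diff:
  assumes "i < n"
  shows "potential (a(i := c)) - potential (a(i := b))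
    = lam i * (\<Sum>j<m. latency (a(i := b)) j * (c j - b j))
      + (\<Sum>j<m. (lam i * (c j - b j))\<^sup>2 / (2 * mu j))"
proof -
  have "load (a(i := c)) j - load (a(i := b)) j = lam i * (c j - b j)" for j
    using load_update[OF assms, of a c j] load_update[OF assms, of a b j]
    by (simp add: algebra_simps)
  then show ?thesis
    using potential_diff[of "a(i := c)" "a(i := b)"]
    by (simp add: load_sqdist_def sum_distrib_left mult_ac)
qed

lemma load_nonneg: "a \<in> profiles \<Longrightarrow> j < m \<Longrightarrow> 0 \<le> load a j"
  unfolding load_def
  by (intro sum_nonneg mult_nonneg_nonneg) (auto intro: less_imp_le lam_pos action_profiles_nonneg)

section \<open>Water filling and minimal potential\<close>

definition total_job :: real where
  "total_job = (\<Sum>i<n. lam i)"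

lemma total_job_pos: "0 < total_job"
  unfolding total_job_def using players lam_pos by (intro sum_pos) (auto simp: lessThan_empty_iff)

lemma sum_mu_pos: "0 < (\<Sum>j<m. mu j)"
  using servers mu_pos by (intro sum_pos) (auto simp: lessThan_empty_iff)

lemma sum_inverse_mu_pos: "0 < (\<Sum>j<m. 1 / mu j)"
  using servers mu_pos by (intro sum_pos) (auto simp: lessThan_empty_iff)

lemma sum_load:
  assumes "a \<in> profiles"
  shows "(\<Sum>j<m. load a j) = total_job"
proof -
  have "(\<Sum>j<m. load a j) = (\<Sum>i<n. lam i * (\<Sum>j<m. a i j))"
    unfolding load_def by (simp add: sum.swap[of _ "{..<m}"] sum_distrib_left)
  then show ?thesis
    using assms by (simp add: total_job_def action_simplexD(2) action_profilesD)
qed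

lemma water_level_exists: "\<exists>c\<ge>0. (\<Sum>j<m. max 0 (mu j * c - s0 j)) = total_job"
proof -
  define f where "f c = (\<Sum>j<m. max 0 (mu j * c - s0 j))" for c
  define b where "b = (total_job + s0 0) / mu 0"
  have mu0: "0 < mu 0" and s00: "0 \<le> s0 0" using servers mu_pos s0_nonneg by auto
  have "f 0 = 0" unfolding f_def using s0_nonneg by (intro sum.neutral) auto
  moreover have "total_job \<le> f b"
  proof -
    have "total_job = max 0 (mu 0 * b - s0 0)" using mu0 total_job_pos by (simp add: b_def)
    also have "\<dots> \<le> f b" unfolding f_def using servers
      by (intro member_le_sum[where f = "\<lambda>j. max 0 (mu j * b - s0 j)"]) auto
    finally show ?thesis .
  qed
  moreover have "0 \<le> b" using mu0 s00 total_job_pos by (simp add: b_def)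
  moreover have "\<forall>c. 0 \<le> c \<and> c \<le> b \<longrightarrow> isCont f c"
    unfolding f_def by (auto intro!: continuous_intros)
  ultimately show ?thesis
    using IVT[of f 0 total_job b] total_job_pos unfolding f_def by auto
qed

definition water_level :: real where
  "water_level = (SOME c. 0 \<le> c \<and> (\<Sum>j<m. max 0 (mu j * c - s0 j)) = total_job)"

definition opt_load :: "nat \<Rightarrow> real" where
  "opt_load j = max 0 (mu j * water_level - s0 j)"

lemma sum_opt_load: "(\<Sum>j<m. opt_load j) = total_job"
  using someI_ex[OF water_level_exists] by (simp add: opt_load_def water_level_def)

definition optimal_profile :: "(nat \<Rightarrow> nat \<Rightarrow> real) \<Rightarrow> bool" where
  "optimal_profile q \<longleftrightarrow> q \<in> profiles \<and> (\<forall>j<m. load q j = opt_load j)"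

definition min_potential :: real where
  "min_potential = (\<Sum>j<m. (s0 j + opt_load j)\<^sup>2 / (2 * mu j))"

lemma potential_optimal: "optimal_profile q \<Longrightarrow> potential q = min_potential"
  unfolding optimal_profile_def potential_def min_potential_def by simp

lemma latency_optimal_ge:
  assumes "optimal_profile q" and "j < m"
  shows "water_level \<le> latency q j"
  using assms mu_pos[of j]
  by (auto simp: optimal_profile_def latency_def opt_load_def field_simps max_def)

lemma latency_optimal_used:
  assumes q: "optimal_profile q" and "i < n" and "j < m" and "q i j \<noteq> 0"
  shows "latency q j = water_level"
proof -
  have nonneg: "0 \<le> q k j" if "k < n" for k
    using q that \<open>j < m\<close> by (auto simp: optimal_profile_def intro: action_profiles_nonneg)
  have "lam i * q i j \<le> load q j"
    unfolding load_def using \<open>i < n\<close> nonneg lam_pos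
    by (intro member_le_sum[where f = "\<lambda>k. lam k * q k j"]) (auto simp: less_imp_le)
  moreover have "0 < lam i * q i j"
    using nonneg[of i] assms lam_pos by simp
  ultimately have "0 < opt_load j" using q \<open>j < m\<close> by (simp add: optimal_profile_def)
  then show ?thesis
    using q \<open>j < m\<close> mu_pos[of j]
    by (auto simp: optimal_profile_def latency_def opt_load_def field_simps)
qed

lemma optimal_latency_variational:
  assumes q: "optimal_profile q" and a: "a \<in> profiles"
  shows "0 \<le> (\<Sum>j<m. latency q j * (load a j - load q j))"
proof -
  have inner: "0 \<le> (\<Sum>j<m. latency q j * (a i j - q i j))" if i: "i < n" for i
  proof -
    have ai: "a i \<in> action_simplex m" and qi: "q i \<in> action_simplex m"
      using a q i by (auto simp: optimal_profile_def action_profilesD)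
    have "(\<Sum>j<m. latency q j * q i j) = (\<Sum>j<m. water_level * q i j)"
      using latency_optimal_used[OF q i] by (intro sum.cong) auto
    also have "\<dots> = (\<Sum>j<m. water_level * a i j)"
      using action_simplexD(2)[OF ai] action_simplexD(2)[OF qi] by (simp flip: sum_distrib_left)
    also have "\<dots> \<le> (\<Sum>j<m. latency q j * a i j)"
      using latency_optimal_ge[OF q] action_simplexD(1)[OF ai]
      by (intro sum_mono mult_right_mono) auto
    finally show ?thesis by (simp add: algebra_simps sum_subtractf)
  qed
  show ?thesis
    unfolding sum_load_diff
  proof (rule sum_nonneg)
    fix i assume "i \<in> {..<n}"
    then show "0 \<le> lam i * (\<Sum>j<m. latency q j * (a i j - q i j))"
      using inner[of i] lam_pos[of i] by simp
  qed
qed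

lemma min_potential_le:
  "optimal_profile q \<Longrightarrow> a \<in> profiles \<Longrightarrow> min_potential + load_sqdist a q \<le> potential a"
  using potential_diff[of a q] optimal_latency_variational[of q a] potential_optimal[of q] by simp

definition proportional_profile :: "nat \<Rightarrow> nat \<Rightarrow> real" where
  "proportional_profile = (\<lambda>i\<in>{..<n}. \<lambda>j\<in>{..<m}. opt_load j / total_job)"

lemma optimal_proportional_profile: "optimal_profile proportional_profile"
proof -
  have "proportional_profile i \<in> action_simplex m" if "i < n" for i
    using that total_job_pos sum_opt_load
    by (intro action_simplexI)
       (auto simp: proportional_profile_def opt_load_def simp flip: sum_divide_distrib)
  moreover have "load proportional_profile j = opt_load j" if "j < m" for j
    using that total_job_pos
    by (simp add: load_def proportional_profile_def total_job_def
        flip: sum_divide_distrib sum_distrib_right)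
  ultimately show ?thesis
    unfolding optimal_profile_def by (auto intro: action_profilesI simp: proportional_profile_def)
qed

lemma min_potential_le_potential:
  assumes "a \<in> profiles"
  shows "min_potential \<le> potential a"
  using min_potential_le[OF optimal_proportional_profile assms]
    load_sqdist_nonneg[of a proportional_profile]
  by linarith

lemma pure_NE_if_min_potential:
  assumes a: "a \<in> profiles" and min: "potential a \<le> min_potential"
  shows "pure_NE n m lam mu s0 a"
  unfolding pure_NE_def
proof (intro conjI a allI impI ballI)
  fix i b assume "i < n" and "b \<in> action_simplex m"
  then have "potential a \<le> potential (a(i := b))"
    using min min_potential_le_potential[OF action_profiles_update[OF a]] by fastforce
  then show "player_cost a i \<le> player_cost (a(i := b)) i"
    using potential_exact[OF \<open>i < n\<close>, of a b] by simp
qed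

section \<open>Best responses\<close>

lemma best_response_variational:
  assumes i: "i < n" and br: "is_best_response n m lam mu s0 a i b" and w: "w \<in> action_simplex m"
  shows "0 \<le> (\<Sum>j<m. latency (a(i := b)) j * (w j - b j))"
proof -
  have b: "b \<in> action_simplex m" using br by (simp add: is_best_response_def)
  define G where "G = (\<Sum>j<m. latency (a(i := b)) j * (w j - b j))"
  define Q where "Q = (\<Sum>j<m. (lam i * (w j - b j))\<^sup>2 / (2 * mu j))"
  have "0 \<le> lam i * G * t + Q * t\<^sup>2" if t: "0 < t" "t \<le> 1" for t
  proof -
    define wt where "wt = (\<lambda>j\<in>{..<m}. (1 - t) * b j + t * w j)"
    have "wt \<in> action_simplex m"
      unfolding wt_def using t by (intro action_simplex_convex b w) auto
    then have "player_cost (a(i := b)) i \<le> player_cost (a(i := wt)) i"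
      using br by (simp add: is_best_response_def)
    then have "0 \<le> potential (a(i := wt)) - potential (a(i := b))"
      using potential_exact[OF i, of "a(i := wt)" b] by simp
    also have "\<dots> = lam i * (\<Sum>j<m. latency (a(i := b)) j * (t * (w j - b j)))
        + (\<Sum>j<m. (lam i * (t * (w j - b j)))\<^sup>2 / (2 * mu j))"
      unfolding potential_update_diff[OF i] by (simp add: wt_def algebra_simps)
    also have "\<dots> = lam i * G * t + Q * t\<^sup>2"
      by (simp add: G_def Q_def sum_distrib_left sum_distrib_right sum_divide_distrib
          power_mult_distrib mult_ac)
    finally show ?thesis .
  qed
  then have "0 \<le> lam i * G" by (rule linear_coeff_nonneg_if_nonneg_near_zero)
  then show ?thesis using lam_pos[OF i] by (simp add: G_def zero_le_mult_iff)
qed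

lemma best_response_decrease:
  assumes a: "a \<in> profiles" and i: "i < n" and br: "is_best_response n m lam mu s0 a i b"
  shows "potential (a(i := b)) + load_sqdist a (a(i := b)) \<le> potential a"
proof -
  have "potential a - potential (a(i := b)) = lam i * (\<Sum>j<m. latency (a(i := b)) j * (a i j - b j))
      + (\<Sum>j<m. (lam i * (a i j - b j))\<^sup>2 / (2 * mu j))"
    using potential_update_diff[OF i, of a "a i" b] by simp
  moreover have "0 \<le> lam i * (\<Sum>j<m. latency (a(i := b)) j * (a i j - b j))"
    using best_response_variational[OF i br action_profilesD[OF a i]] lam_pos[OF i] by simp
  moreover have "load_sqdist a (a(i := b)) = (\<Sum>j<m. (lam i * (a i j - b j))\<^sup>2 / (2 * mu j))"
    unfolding load_sqdist_def load_update[OF i] by (simp add: algebra_simps)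
  ultimately show ?thesis by simp
qed

section \<open>A nearby optimal profile\<close>

context
  fixes y :: "nat \<Rightarrow> nat \<Rightarrow> real"
  assumes y: "y \<in> profiles"
begin

definition excess :: "nat \<Rightarrow> real" where
  "excess j = max 0 (load y j - opt_load j)"

definition deficit :: "nat \<Rightarrow> real" where
  "deficit j = max 0 (opt_load j - load y j)"

definition total_excess :: real where
  "total_excess = (\<Sum>j<m. excess j)"

definition shed_fraction :: "nat \<Rightarrow> real" where
  "shed_fraction j = excess j / load y j"

definition shed :: "nat \<Rightarrow> real" where
  "shed i = (\<Sum>j<m. y i j * shed_fraction j)"

text \<open>The
  divisions by zero are harmless: a server without load has no excess, and without total
  excess there are no deficits.\<close>

definition rebalance :: "nat \<Rightarrow> nat \<Rightarrow> real" where
  "rebalance = (\<lambda>i\<in>{..<n}. \<lambda>j\<in>{..<m}.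
     y i j * (1 - shed_fraction j) + shed i * (deficit j / total_excess))"

lemma shed_fraction_bounds: "j < m \<Longrightarrow> 0 \<le> shed_fraction j \<and> shed_fraction j \<le> 1"
  using load_nonneg[OF y, of j]
  by (cases "load y j = 0") (auto simp: shed_fraction_def excess_def opt_load_def field_simps)

lemma load_shed_fraction: "j < m \<Longrightarrow> load y j * shed_fraction j = excess j"
  using load_nonneg[OF y, of j] by (auto simp: shed_fraction_def excess_def opt_load_def)

lemma sum_deficit: "(\<Sum>j<m. deficit j) = total_excess"
proof -
  have "excess j - deficit j = load y j - opt_load j" for j
    by (simp add: excess_def deficit_def)
  then have "total_excess - (\<Sum>j<m. deficit j) = (\<Sum>j<m. load y j) - (\<Sum>j<m. opt_load j)"
    by (simp add: total_excess_def flip: sum_subtractf)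
  then show ?thesis using sum_load[OF y] sum_opt_load by simp
qed

lemma shed_nonneg: "i < n \<Longrightarrow> 0 \<le> shed i"
  unfolding shed_def using action_profiles_nonneg[OF y] shed_fraction_bounds
  by (auto intro!: sum_nonneg)

lemma sum_shed: "(\<Sum>i<n. lam i * shed i) = total_excess"
proof -
  have "(\<Sum>i<n. lam i * shed i) = (\<Sum>j<m. load y j * shed_fraction j)"
    unfolding shed_def load_def
    by (simp add: sum_distrib_left sum_distrib_right sum.swap[of _ "{..<m}"] mult_ac)
  then show ?thesis by (simp add: load_shed_fraction total_excess_def)
qed

lemma deficit_zero_if_balanced: "total_excess = 0 \<Longrightarrow> j < m \<Longrightarrow> deficit j = 0"
  using sum_deficit by (simp add: deficit_def sum_nonneg_eq_0_iff)

lemma shed_zero_if_balanced: "total_excess = 0 \<Longrightarrow> shed i = 0"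
  by (simp add: shed_def shed_fraction_def total_excess_def excess_def sum_nonneg_eq_0_iff)

lemma shed_redistributed: "shed i * ((\<Sum>j<m. deficit j) / total_excess) = shed i"
  using shed_zero_if_balanced by (cases "total_excess = 0") (auto simp: sum_deficit)

lemma rebalance_row_sum: "i < n \<Longrightarrow> (\<Sum>j<m. rebalance i j) = 1"
proof -
  assume i: "i < n"
  have "(\<Sum>j<m. rebalance i j)
      = (\<Sum>j<m. y i j) - shed i + shed i * ((\<Sum>j<m. deficit j) / total_excess)"
    using i by (simp add: rebalance_def shed_def right_diff_distrib sum.distrib sum_subtractf
        sum_distrib_left sum_divide_distrib)
  then show ?thesis
    using action_simplexD(2)[OF action_profilesD[OF y i]] shed_redistributed[of i] by simp
qed

lemma rebalance_optimal: "optimal_profile rebalance"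
proof -
  have "rebalance i \<in> action_simplex m" if i: "i < n" for i
    using i action_profiles_nonneg[OF y] shed_fraction_bounds shed_nonneg rebalance_row_sum
    by (intro action_simplexI)
       (auto simp: rebalance_def deficit_def total_excess_def excess_def
         intro!: add_nonneg_nonneg mult_nonneg_nonneg divide_nonneg_nonneg sum_nonneg)
  moreover have "load rebalance j = opt_load j" if j: "j < m" for j
  proof -
    have "load rebalance j = (\<Sum>i<n. lam i * y i j * (1 - shed_fraction j)
        + lam i * shed i * (deficit j / total_excess))"
      using j by (simp add: load_def rebalance_def distrib_left mult.assoc)
    also have "\<dots> = load y j * (1 - shed_fraction j)
        + (\<Sum>i<n. lam i * shed i) * (deficit j / total_excess)"
      by (simp only: load_def sum.distrib sum_distrib_right)
    also have "\<dots> = load y j - excess j + deficit j"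
      using deficit_zero_if_balanced[OF _ j] load_shed_fraction[OF j]
      by (cases "total_excess = 0") (auto simp: sum_shed right_diff_distrib)
    also have "\<dots> = opt_load j" by (simp add: excess_def deficit_def)
    finally show ?thesis .
  qed
  ultimately show ?thesis
    unfolding optimal_profile_def by (auto intro: action_profilesI simp: rebalance_def)
qed

lemma rebalance_close_row: "i < n \<Longrightarrow> (\<Sum>j<m. \<bar>y i j - rebalance i j\<bar>) \<le> 2 * shed i"
proof -
  assume i: "i < n"
  have "\<bar>y i j - rebalance i j\<bar> \<le> y i j * shed_fraction j + shed i * (deficit j / total_excess)"
    if "j < m" for j
  proof -
    have "0 \<le> y i j * shed_fraction j" "0 \<le> shed i * (deficit j / total_excess)"
      using i that action_profiles_nonneg[OF y] shed_fraction_bounds shed_nonneg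
      by (auto simp: deficit_def total_excess_def excess_def
          intro!: divide_nonneg_nonneg sum_nonneg)
    then show ?thesis using i that by (simp add: rebalance_def right_diff_distrib)
  qed
  then have "(\<Sum>j<m. \<bar>y i j - rebalance i j\<bar>)
      \<le> (\<Sum>j<m. y i j * shed_fraction j + shed i * (deficit j / total_excess))"
    by (intro sum_mono) simp
  also have "\<dots> = (\<Sum>j<m. y i j * shed_fraction j) + shed i * ((\<Sum>j<m. deficit j) / total_excess)"
    by (simp only: sum.distrib sum_distrib_left sum_divide_distrib)
  finally show ?thesis by (simp only: shed_redistributed) (simp add: shed_def)
qed

lemma rebalance_close:
  "(\<Sum>i<n. lam i * (\<Sum>j<m. \<bar>y i j - rebalance i j\<bar>)) \<le> (\<Sum>j<m. \<bar>load y j - opt_load j\<bar>)"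
proof -
  have "(\<Sum>i<n. lam i * (\<Sum>j<m. \<bar>y i j - rebalance i j\<bar>)) \<le> (\<Sum>i<n. lam i * (2 * shed i))"
    using lam_pos rebalance_close_row by (intro sum_mono mult_left_mono) (auto intro: less_imp_le)
  also have "\<dots> = 2 * (\<Sum>i<n. lam i * shed i)"
    by (simp add: sum_distrib_left mult_ac)
  also have "\<dots> = 2 * total_excess"
    by (simp only: sum_shed)
  also have "\<dots> = (\<Sum>j<m. \<bar>load y j - opt_load j\<bar>)"
  proof -
    have "\<bar>load y j - opt_load j\<bar> = excess j + deficit j" for j
      by (auto simp: excess_def deficit_def)
    then show ?thesis by (simp add: sum.distrib sum_deficit total_excess_def)
  qed
  finally show ?thesis .
qed

end

lemma optimal_profile_near:
  "y \<in> profiles \<Longrightarrow> \<exists>q. optimal_profile q \<and>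
     (\<Sum>i<n. lam i * (\<Sum>j<m. \<bar>y i j - q i j\<bar>)) \<le> (\<Sum>j<m. \<bar>load y j - opt_load j\<bar>)"
  using rebalance_optimal rebalance_close by blast

end

section \<open>Convergence of best-response dynamics\<close>

locale best_response_run = load_balancing +
  fixes x :: "nat \<Rightarrow> nat \<Rightarrow> nat \<Rightarrow> real"
  assumes run: "br_dynamics n m lam mu s0 x"
begin

lemma active_player: "t mod n < n"
  using players by simp

lemma run_step:
  obtains b where "is_best_response n m lam mu s0 (x t) (t mod n) b"
    and "x (Suc t) = (x t)(t mod n := b)"
  using run unfolding br_dynamics_def by blast

lemma run_profile: "x t \<in> profiles"
proof (induction t)
  case 0
  then show ?case using run by (simp add: br_dynamics_def)
next
  case (Suc t)
  obtain b where b: "is_best_response n m lam mu s0 (x t) (t mod n) b"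
    and step: "x (Suc t) = (x t)(t mod n := b)"
    by (rule run_step)
  from b have "b \<in> action_simplex m" by (simp add: is_best_response_def)
  then show ?case unfolding step by (rule action_profiles_update[OF Suc.IH active_player])
qed

lemma run_other: "i \<noteq> t mod n \<Longrightarrow> x (Suc t) i = x t i"
  by (rule run_step[of t]) simp

lemma run_variational:
  "w \<in> action_simplex m \<Longrightarrow> 0 \<le> (\<Sum>j<m. latency (x (Suc t)) j * (w j - x (Suc t) (t mod n) j))"
  by (rule run_step[of t]) (use best_response_variational[OF active_player] in simp)

lemma run_decrease: "potential (x (Suc t)) + load_sqdist (x t) (x (Suc t)) \<le> potential (x t)"
  by (rule run_step[of t]) (use best_response_decrease[OF run_profile active_player] in simp)

definition gap :: "nat \<Rightarrow> real" where
  "gap t = potential (x t) - min_potential"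

lemma gap_nonneg: "0 \<le> gap t"
  using min_potential_le_potential[OF run_profile] by (simp add: gap_def)

lemma gap_decrease: "gap (Suc t) + load_sqdist (x t) (x (Suc t)) \<le> gap t"
  using run_decrease by (simp add: gap_def)

lemma decseq_gap: "decseq gap"
proof (rule decseq_SucI)
  show "gap (Suc t) \<le> gap t" for t
    using gap_decrease[of t] load_sqdist_nonneg[of "x t" "x (Suc t)"] by linarith
qed

lemma sum_load_sqdist_le_gap:
  "(\<Sum>s\<in>{t..<t + k}. load_sqdist (x s) (x (Suc s))) \<le> gap t - gap (t + k)"
proof (induction k)
  case (Suc k)
  then show ?case using gap_decrease[of "t + k"] by simp
qed simp

lemma last_update:
  assumes "i < n"
  shows "\<exists>\<tau>. t \<le> \<tau> \<and> \<tau> < t + n \<and> \<tau> mod n = i \<and> x (t + n) i = x (Suc \<tau>) i"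
proof -
  define \<tau> where "\<tau> = t + (i + n - t mod n) mod n"
  have \<tau>: "t \<le> \<tau>" "\<tau> < t + n" using players by (auto simp: \<tau>_def)
  have "\<tau> mod n = (t + (i + n - t mod n)) mod n" by (simp add: \<tau>_def mod_add_right_eq)
  also have "\<dots> = (t mod n + (i + n - t mod n)) mod n" by (simp add: mod_add_left_eq)
  also have "t mod n + (i + n - t mod n) = i + n" using active_player[of t] by simp
  finally have \<tau>_mod: "\<tau> mod n = i" using assms by simp
  have "Suc \<tau> \<le> t + n" using \<tau> by simp
  then have "x (t + n) i = x (Suc \<tau>) i"
  proof (induction rule: dec_induct)
    case (step u)
    have "u mod n \<noteq> \<tau> mod n"
    proof
      assume "u mod n = \<tau> mod n"
      then have "n dvd u - \<tau>" using step.hyps by (simp add: mod_eq_dvd_iff_nat)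
      moreover have "0 < u - \<tau>" "u - \<tau> < n" using step.hyps \<tau> by auto
      ultimately show False by (meson nat_dvd_not_less)
    qed
    then show ?case using step \<tau>_mod run_other[of i u] by simp
  qed simp
  then show ?thesis using \<tau> \<tau>_mod by auto
qed

definition drift :: "nat \<Rightarrow> real" where
  "drift t = (\<Sum>j<m. \<Sum>s\<in>{t..<t + n}. \<bar>load (x (Suc s)) j - load (x s) j\<bar> / mu j)"

lemma latency_drift:
  assumes "t \<le> u" and "u \<le> t + n" and j: "j < m"
  shows "\<bar>latency (x (t + n)) j - latency (x u) j\<bar> \<le> drift t"
proof -
  have "load (x (t + n)) j - load (x u) j = (\<Sum>s\<in>{u..<t + n}. load (x (Suc s)) j - load (x s) j)"
    using assms sum_Suc_diff'[of u "t + n" "\<lambda>s. load (x s) j"] by simp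
  then have "\<bar>latency (x (t + n)) j - latency (x u) j\<bar>
      = \<bar>\<Sum>s\<in>{u..<t + n}. load (x (Suc s)) j - load (x s) j\<bar> / mu j"
    using mu_pos[OF j] by (simp add: latency_def abs_divide diff_divide_distrib[symmetric])
  also have "\<dots> \<le> (\<Sum>s\<in>{u..<t + n}. \<bar>load (x (Suc s)) j - load (x s) j\<bar>) / mu j"
    using mu_pos[OF j] by (intro divide_right_mono sum_abs) auto
  also have "\<dots> \<le> (\<Sum>s\<in>{t..<t + n}. \<bar>load (x (Suc s)) j - load (x s) j\<bar>) / mu j"
    using assms mu_pos[OF j] by (intro divide_right_mono sum_mono2) auto
  also have "\<dots> \<le> drift t"
    unfolding drift_def sum_divide_distrib using j mu_pos
    by (intro member_le_sum[where i = j]) (auto intro!: sum_nonneg divide_nonneg_pos)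
  finally show ?thesis .
qed

lemma drift_nonneg: "0 \<le> drift t"
  unfolding drift_def using mu_pos by (auto intro!: sum_nonneg divide_nonneg_pos)

lemma drift_squared_le: "(drift t)\<^sup>2 \<le> 2 * n * (\<Sum>j<m. 1 / mu j) * (gap t - gap (t + n))"
proof -
  define I where "I = {..<m} \<times> {t..<t + n}"
  define f where "f = (\<lambda>(j, s). (load (x (Suc s)) j - load (x s) j) / mu j)"
  define w where "w = (\<lambda>(j, s :: nat). 1 / mu j)"
  have "drift t = (\<Sum>a\<in>I. \<bar>f a\<bar>)"
    unfolding drift_def I_def f_def sum.cartesian_product' using mu_pos
    by (intro sum.cong refl) (auto simp: abs_divide abs_of_pos)
  moreover have "0 < w a" if "a \<in> I" for a
    using that mu_pos by (auto simp: I_def w_def)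
  ultimately have "(drift t)\<^sup>2 \<le> (\<Sum>a\<in>I. w a) * (\<Sum>a\<in>I. (f a)\<^sup>2 / w a)"
    by (simp add: sum_abs_squared_le_weighted)
  also have "(\<Sum>a\<in>I. w a) = n * (\<Sum>j<m. 1 / mu j)"
    by (simp add: I_def w_def sum.cartesian_product' sum_distrib_left)
  also have "(\<Sum>a\<in>I. (f a)\<^sup>2 / w a)
      = (\<Sum>j<m. \<Sum>s\<in>{t..<t + n}. 2 * ((load (x s) j - load (x (Suc s)) j)\<^sup>2 / (2 * mu j)))"
  proof -
    have "((p - q) / mu j)\<^sup>2 / (1 / mu j) = 2 * ((q - p)\<^sup>2 / (2 * mu j))" for p q :: real and j
      by (cases "mu j = 0") (simp_all add: power2_eq_square field_simps)
    then show ?thesis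
      unfolding I_def sum.cartesian_product' f_def w_def by (simp only: prod.case)
  qed
  also have "\<dots> = 2 * (\<Sum>s\<in>{t..<t + n}. load_sqdist (x s) (x (Suc s)))"
    by (simp add: load_sqdist_def sum.swap[of _ "{..<m}"] sum_distrib_left)
  finally have "(drift t)\<^sup>2
      \<le> n * (\<Sum>j<m. 1 / mu j) * (2 * (\<Sum>s\<in>{t..<t + n}. load_sqdist (x s) (x (Suc s))))" .
  also have "\<dots> \<le> n * (\<Sum>j<m. 1 / mu j) * (2 * (gap t - gap (t + n)))"
    using sum_load_sqdist_le_gap[of t n] sum_inverse_mu_pos by (intro mult_left_mono) auto
  finally show ?thesis by (simp add: algebra_simps)
qed

lemma player_latency_drift:
  assumes i: "i < n" and q: "q i \<in> action_simplex m"
  shows "(\<Sum>j<m. latency (x (t + n)) j * (x (t + n) i j - q i j))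
    \<le> drift t * (\<Sum>j<m. \<bar>x (t + n) i j - q i j\<bar>)"
proof -
  obtain \<tau> where \<tau>: "t \<le> \<tau>" "\<tau> < t + n" "\<tau> mod n = i" and last: "x (t + n) i = x (Suc \<tau>) i"
    using last_update[OF i] by blast
  define y where "y = x (t + n)"
  \<comment> \<open>The variational inequality of player \<open>i\<close>'s last move in the round, with latencies
    that have drifted by at most \<open>drift t\<close> since.\<close>
  have "0 \<le> (\<Sum>j<m. latency (x (Suc \<tau>)) j * (q i j - y i j))"
    using run_variational[OF q, of \<tau>] \<tau> last by (simp add: y_def)
  moreover have "(\<Sum>j<m. (latency y j - latency (x (Suc \<tau>)) j) * (y i j - q i j))
      = (\<Sum>j<m. latency y j * (y i j - q i j) + latency (x (Suc \<tau>)) j * (q i j - y i j))"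
    by (rule sum.cong) (simp_all add: algebra_simps)
  moreover have "\<dots> = (\<Sum>j<m. latency y j * (y i j - q i j))
      + (\<Sum>j<m. latency (x (Suc \<tau>)) j * (q i j - y i j))"
    by (rule sum.distrib)
  ultimately have "(\<Sum>j<m. latency y j * (y i j - q i j))
      \<le> (\<Sum>j<m. (latency y j - latency (x (Suc \<tau>)) j) * (y i j - q i j))"
    by linarith
  also have "\<dots> \<le> (\<Sum>j<m. drift t * \<bar>y i j - q i j\<bar>)"
  proof (rule sum_mono)
    fix j assume "j \<in> {..<m}"
    then have "\<bar>latency y j - latency (x (Suc \<tau>)) j\<bar> \<le> drift t"
      unfolding y_def using \<tau> by (intro latency_drift) auto
    then have "\<bar>latency y j - latency (x (Suc \<tau>)) j\<bar> * \<bar>y i j - q i j\<bar> \<le> drift t * \<bar>y i j - q i j\<bar>"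
      by (rule mult_right_mono) simp
    then show "(latency y j - latency (x (Suc \<tau>)) j) * (y i j - q i j) \<le> drift t * \<bar>y i j - q i j\<bar>"
      using abs_ge_self[of "(latency y j - latency (x (Suc \<tau>)) j) * (y i j - q i j)"]
      unfolding abs_mult by linarith
  qed
  finally show ?thesis by (simp only: y_def sum_distrib_left)
qed

lemma gap_le_drift:
  assumes q: "optimal_profile q"
  shows "gap (t + n) + load_sqdist (x (t + n)) q
    \<le> drift t * (\<Sum>i<n. lam i * (\<Sum>j<m. \<bar>x (t + n) i j - q i j\<bar>))"
proof -
  define y where "y = x (t + n)"
  have "gap (t + n) + load_sqdist y q = (\<Sum>j<m. latency y j * (load y j - load q j))"
    using potential_diff[of q y] potential_optimal[OF q] load_sqdist_commute[of q y]
    by (simp add: gap_def y_def sum_subtractf right_diff_distrib)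
  also have "\<dots> = (\<Sum>i<n. lam i * (\<Sum>j<m. latency y j * (y i j - q i j)))"
    by (rule sum_load_diff)
  also have "\<dots> \<le> (\<Sum>i<n. lam i * (drift t * (\<Sum>j<m. \<bar>y i j - q i j\<bar>)))"
    using q lam_pos unfolding y_def
    by (intro sum_mono mult_left_mono player_latency_drift)
       (auto simp: optimal_profile_def action_profilesD less_imp_le)
  finally show ?thesis by (simp add: y_def sum_distrib_left mult_ac)
qed

lemma gap_contraction:
  "gap (t + n) \<le> n * (\<Sum>j<m. mu j) * (\<Sum>j<m. 1 / mu j) * (gap t - gap (t + n))"
proof -
  define y where "y = x (t + n)"
  define A where "A = (\<Sum>j<m. \<bar>load y j - opt_load j\<bar>)"
  define M where "M = (\<Sum>j<m. mu j)"
  obtain q where q: "optimal_profile q" and close: "(\<Sum>i<n. lam i * (\<Sum>j<m. \<bar>y i j - q i j\<bar>)) \<le> A"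
    using optimal_profile_near[OF run_profile] unfolding y_def A_def by blast
  have gap_le: "gap (t + n) + load_sqdist y q \<le> drift t * A"
    using gap_le_drift[OF q, of t, folded y_def] mult_left_mono[OF close drift_nonneg[of t]]
    by linarith
  have A_le: "A\<^sup>2 \<le> 2 * M * load_sqdist y q"
  proof -
    have "A\<^sup>2 \<le> (\<Sum>j<m. 2 * mu j) * (\<Sum>j<m. (load y j - opt_load j)\<^sup>2 / (2 * mu j))"
      unfolding A_def using mu_pos by (intro sum_abs_squared_le_weighted) simp
    also have "(\<Sum>j<m. (load y j - opt_load j)\<^sup>2 / (2 * mu j)) = load_sqdist y q"
      using q by (simp add: load_sqdist_def optimal_profile_def)
    finally show ?thesis by (simp add: M_def sum_distrib_left)
  qed
  have M: "0 < M" using sum_mu_pos by (simp add: M_def)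
  have "2 * M * gap (t + n) \<le> 2 * M * (drift t * A - load_sqdist y q)"
    using gap_le M by (intro mult_left_mono) auto
  also have "\<dots> \<le> 2 * M * drift t * A - A\<^sup>2"
    using A_le by (simp add: right_diff_distrib mult.assoc)
  also have "\<dots> \<le> (M * drift t)\<^sup>2"
    using zero_le_power2[of "M * drift t - A"] by (simp add: power2_diff algebra_simps)
  finally have "gap (t + n) \<le> M / 2 * (drift t)\<^sup>2"
    using M by (simp add: power_mult_distrib power2_eq_square field_simps)
  also have "\<dots> \<le> M / 2 * (2 * n * (\<Sum>j<m. 1 / mu j) * (gap t - gap (t + n)))"
    using M drift_squared_le by (intro mult_left_mono) auto
  finally show ?thesis by (simp add: M_def mult_ac)
qed

lemma gap_geometric: "\<exists>G \<theta>. 0 < \<theta> \<and> \<theta> < 1 \<and> (\<forall>t. gap t \<le> G * \<theta> ^ t)"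
proof -
  define C where "C = n * (\<Sum>j<m. mu j) * (\<Sum>j<m. 1 / mu j)"
  have C: "0 < C" using players sum_mu_pos sum_inverse_mu_pos by (simp add: C_def)
  have "gap (t + n) \<le> C / (1 + C) * gap t" for t
    using gap_contraction[of t] C by (simp add: C_def field_simps)
  then show ?thesis
    using decseq_gap gap_nonneg players C
    by (intro decseq_geometric_bound[where k = n and \<rho> = "C / (1 + C)"]) auto
qed

lemma run_increment_le:
  assumes i: "i < n" and j: "j < m"
  shows "\<bar>x (Suc t) i j - x t i j\<bar> \<le> sqrt (2 * mu j * gap t) / lam i"
proof (cases "i = t mod n")
  case False
  then show ?thesis using run_other[OF False] lam_pos[OF i] gap_nonneg mu_pos[OF j] by simp
next
  case True
  obtain b where step: "x (Suc t) = (x t)(t mod n := b)" by (rule run_step)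
  have "(load (x t) j - load (x (Suc t)) j)\<^sup>2 / (2 * mu j) \<le> load_sqdist (x t) (x (Suc t))"
    unfolding load_sqdist_def using j mu_pos
    by (intro member_le_sum[where f = "\<lambda>j. (load (x t) j - load (x (Suc t)) j)\<^sup>2 / (2 * mu j)"])
       (auto intro!: divide_nonneg_pos)
  also have "\<dots> \<le> gap t" using gap_decrease[of t] gap_nonneg[of "Suc t"] by simp
  finally have "(load (x t) j - load (x (Suc t)) j)\<^sup>2 \<le> 2 * mu j * gap t"
    using mu_pos[OF j] by (simp add: pos_divide_le_eq mult_ac)
  moreover have "load (x t) j - load (x (Suc t)) j = - (lam i * (x (Suc t) i j - x t i j))"
    using step True load_update[OF i, of "x t" b j] by (simp add: algebra_simps)
  ultimately have "(lam i * (x (Suc t) i j - x t i j))\<^sup>2 \<le> 2 * mu j * gap t"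
    by simp
  then have "\<bar>lam i * (x (Suc t) i j - x t i j)\<bar> \<le> sqrt (2 * mu j * gap t)"
    using real_sqrt_le_mono by fastforce
  then have "lam i * \<bar>x (Suc t) i j - x t i j\<bar> \<le> sqrt (2 * mu j * gap t)"
    using lam_pos[OF i] by (simp add: abs_mult)
  then show ?thesis using lam_pos[OF i] by (simp add: field_simps)
qed

lemma run_convergent:
  assumes i: "i < n" and j: "j < m"
  shows "convergent (\<lambda>t. x t i j)"
proof -
  obtain G \<theta> where \<theta>: "0 < \<theta>" "\<theta> < 1" and G: "\<And>t. gap t \<le> G * \<theta> ^ t"
    using gap_geometric by blast
  define c where "c = sqrt (2 * mu j * G) / lam i"
  have bound: "norm (x (Suc t) i j - x t i j) \<le> c * sqrt \<theta> ^ t" for t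
  proof -
    have "\<bar>x (Suc t) i j - x t i j\<bar> \<le> sqrt (2 * mu j * gap t) / lam i"
      by (rule run_increment_le[OF i j])
    also have "\<dots> \<le> sqrt (2 * mu j * (G * \<theta> ^ t)) / lam i"
      using G mu_pos[OF j] lam_pos[OF i]
      by (intro divide_right_mono real_sqrt_le_mono mult_left_mono) auto
    also have "\<dots> = c * sqrt \<theta> ^ t"
      by (simp add: c_def real_sqrt_mult real_sqrt_power)
    finally show ?thesis by simp
  qed
  have "summable (\<lambda>t. c * sqrt \<theta> ^ t)"
    using \<theta> by (intro summable_mult summable_geometric) simp
  then have "summable (\<lambda>t. x (Suc t) i j - x t i j)"
    using bound by (rule summable_comparison_test'[where N = 0])
  then show ?thesis
    by (rule convergent_if_summable_increments)
qed

lemma gap_tendsto_zero: "gap \<longlonglongrightarrow> 0"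
proof -
  obtain G \<theta> where \<theta>: "0 < \<theta>" "\<theta> < 1" and G: "\<And>t. gap t \<le> G * \<theta> ^ t"
    using gap_geometric by blast
  have "(\<lambda>t. G * \<theta> ^ t) \<longlonglongrightarrow> 0"
    using \<theta> by (simp add: LIMSEQ_power_zero tendsto_mult_right_zero)
  then show ?thesis
    using G gap_nonneg by (intro tendsto_sandwich[of "\<lambda>_. 0" gap sequentially "\<lambda>t. G * \<theta> ^ t"]) auto
qed

definition run_limit :: "nat \<Rightarrow> nat \<Rightarrow> real" where
  "run_limit = (\<lambda>i\<in>{..<n}. \<lambda>j\<in>{..<m}. lim (\<lambda>t. x t i j))"

lemma run_tendsto_limit:
  assumes "i < n" and "j < m"
  shows "(\<lambda>t. x t i j) \<longlonglongrightarrow> run_limit i j"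
  using run_convergent[OF assms] assms by (simp add: run_limit_def convergent_LIMSEQ_iff)

lemma run_limit_profile: "run_limit \<in> profiles"
proof (rule action_profilesI)
  fix i assume i: "i < n"
  have xi: "x t i \<in> action_simplex m" for t
    using action_profilesD[OF run_profile i] .
  show "run_limit i \<in> action_simplex m"
  proof (rule action_simplexI)
    show "run_limit i \<in> extensional {..<m}" using i by (simp add: run_limit_def)
  next
    fix j assume j: "j < m"
    show "0 \<le> run_limit i j"
    proof (rule LIMSEQ_le_const[OF run_tendsto_limit[OF i j]])
      show "\<exists>N. \<forall>t\<ge>N. 0 \<le> x t i j" using action_simplexD(1)[OF xi j] by blast
    qed
  next
    have "(\<lambda>t. \<Sum>j<m. x t i j) \<longlonglongrightarrow> (\<Sum>j<m. run_limit i j)"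
      using i by (intro tendsto_sum run_tendsto_limit) auto
    moreover have "(\<lambda>t. \<Sum>j<m. x t i j) = (\<lambda>t. 1)"
      using action_simplexD(2)[OF xi] by simp
    ultimately have "(\<lambda>t. 1) \<longlonglongrightarrow> (\<Sum>j<m. run_limit i j)" by simp
    from LIMSEQ_unique[OF tendsto_const this] show "(\<Sum>j<m. run_limit i j) = 1" by simp
  qed
qed (simp add: run_limit_def)

lemma potential_tendsto_limit: "(\<lambda>t. potential (x t)) \<longlonglongrightarrow> potential run_limit"
proof -
  have "mu j \<noteq> 0" if "j < m" for j using mu_pos[OF that] by simp
  then show ?thesis
    unfolding potential_def load_def
    by (intro tendsto_sum tendsto_divide tendsto_power tendsto_add tendsto_mult tendsto_const
        run_tendsto_limit) auto
qed

lemma run_limit_pure_NE: "pure_NE n m lam mu s0 run_limit"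
proof (rule pure_NE_if_min_potential[OF run_limit_profile])
  have "(\<lambda>t. gap t + min_potential) \<longlonglongrightarrow> 0 + min_potential"
    by (intro tendsto_add gap_tendsto_zero tendsto_const)
  then have "(\<lambda>t. potential (x t)) \<longlonglongrightarrow> min_potential" by (simp add: gap_def)
  from LIMSEQ_unique[OF potential_tendsto_limit this] show "potential run_limit \<le> min_potential"
    by simp
qed

end

theorem theorem1:
  fixes n m :: nat and lam mu s0 :: "nat \<Rightarrow> real"
  assumes "n \<ge> 1" and "m \<ge> 1"
    and "\<forall>j<m. mu j > 0" and "\<forall>j<m. s0 j \<ge> 0" and "\<forall>i<n. lam i > 0"
  shows "(\<exists>\<Phi> :: (nat \<Rightarrow> nat \<Rightarrow> real) \<Rightarrow> real.
            \<forall>i<n. \<forall>a\<in>action_profiles n m. \<forall>b\<in>action_simplex m.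
              \<Phi> a - \<Phi> (a(i := b)) = cost n m lam mu s0 a i - cost n m lam mu s0 (a(i := b)) i)
       \<and> (\<exists>a. pure_NE n m lam mu s0 a)
       \<and> (\<forall>x. br_dynamics n m lam mu s0 x \<longrightarrow>
            (\<exists>a. pure_NE n m lam mu s0 a \<and>
                 (\<forall>i<n. \<forall>j<m. (\<lambda>t. x t i j) \<longlonglongrightarrow> a i j)))"
proof -
  interpret load_balancing n m lam mu s0
    using assms by unfold_locales auto
  have "\<forall>x. br_dynamics n m lam mu s0 x \<longrightarrow>
      (\<exists>a. pure_NE n m lam mu s0 a \<and> (\<forall>i<n. \<forall>j<m. (\<lambda>t. x t i j) \<longlonglongrightarrow> a i j))"
  proof (intro allI impI)
    fix x assume "br_dynamics n m lam mu s0 x"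
    then interpret best_response_run n m lam mu s0 x
      by unfold_locales
    show "\<exists>a. pure_NE n m lam mu s0 a \<and> (\<forall>i<n. \<forall>j<m. (\<lambda>t. x t i j) \<longlonglongrightarrow> a i j)"
      using run_limit_pure_NE run_tendsto_limit by blast
  qed
  moreover have "pure_NE n m lam mu s0 proportional_profile"
    using optimal_proportional_profile
    by (intro pure_NE_if_min_potential) (auto simp: optimal_profile_def potential_optimal)
  ultimately show ?thesis
    using potential_exact by blast
qed

end
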